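(* For a word $w=w_1\cdots w_n$ over $\{1,2,3,4\}$ let $r(w)=|\{i: w_{i+1}-w_i=2,\ w_{i+1}\text{ odd}\}|+|\{i: w_{i+2}-w_i=2,\ w_{i+2}\text{ odd}\}|$ (the number of occurrences of the place-difference-value pattern $(12,(\mathbb{P},\{1,2\},\mathbb{P}),\{(1,2,\{2\})\},(\mathbb{O},\mathbb{P}))$, i.e. pairs of odd letters at distance $1$ or $2$ whose later letter exceeds the earlier one by exactly $2$). Then $$\sum_{w\in\{1,2,3,4\}^*}q^{|w|}z^{r(w)}=\frac{1}{1-4q-(z-1)q^2-2(z^2-1)q^3-z(z-1)^2q^4}.$$
   Context: The sum ranges over all finite words over $\{1,2,3,4\}$, including the empty word; $|w|$ denotes length; $\mathbb{O}$ is the set of odd numbers. *)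

theory Defs
  imports "HOL-Computational_Algebra.Formal_Power_Series"
begin

definition words :: "nat \<Rightarrow> nat list set" where
  "words n = {w. length w = n \<and> set w \<subseteq> {1,2,3,4}}"

definition r :: "nat list \<Rightarrow> nat" where
  "r w = card {i. i + 1 < length w \<and> w ! (i+1) = w ! i + 2 \<and> odd (w ! (i+1))}
       + card {i. i + 2 < length w \<and> w ! (i+2) = w ! i + 2 \<and> odd (w ! (i+2))}"

text \<open>The generating function in q (the fps variable), with z a parameter.\<close>
definition gen_fun :: "'a::comm_ring_1 \<Rightarrow> 'a fps" where
  "gen_fun z = Abs_fps (\<lambda>n. \<Sum>w\<in>words n. z ^ r w)"

end

theory Submission
  imports Defs
begin

text \<open>Prepending a letter \<open>c\<close> to a word over \<open>{1,2,3,4}\<close> creates new occurrences only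
  when \<open>c = 1\<close>, one for each \<open>3\<close> among the next two letters. So the weight \<open>z ^ r w\<close> can be
  built letter by letter while remembering only which of the first two letters are \<open>3\<close>.
  This is a four-state transfer matrix; its characteristic polynomial gives a linear
  recurrence of order four for the coefficients, i.e. the stated denominator.\<close>

lemma card_Collect_nat_shift:
  assumes "finite {i. P (Suc i)}"
  shows "card {i. P i} = card {i. P (Suc i)} + of_bool (P 0)"
proof -
  have split: "{i. P i} = {i. P i \<and> i = 0} \<union> Suc ` {i. P (Suc i)}"
    by (auto simp: image_iff) (metis not0_implies_Suc)
  have "card {i. P i} = card {i. P i \<and> i = 0} + card (Suc ` {i. P (Suc i)})"
    unfolding split by (rule card_Un_disjoint) (use assms in auto)
  moreover have "{i. P i \<and> i = 0} = (if P 0 then {0} else {})"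
    by auto
  ultimately show ?thesis
    by (simp add: card_image)
qed

lemma r_Cons:
  "r (c # w) = r w + of_bool (0 < length w \<and> w ! 0 = c + 2 \<and> odd (w ! 0))
                   + of_bool (1 < length w \<and> w ! 1 = c + 2 \<and> odd (w ! 1))"
proof -
  have fin: "finite {i. P i}" if "\<And>i. P i \<Longrightarrow> i < length w" for P
    using that by (auto intro: finite_subset[of _ "{..<length w}"])
  have adjacent:
    "card {i. i + 1 < length (c#w) \<and> (c#w) ! (i+1) = (c#w) ! i + 2 \<and> odd ((c#w) ! (i+1))}
     = card {i. i + 1 < length w \<and> w ! (i+1) = w ! i + 2 \<and> odd (w ! (i+1))}
       + of_bool (0 < length w \<and> w ! 0 = c + 2 \<and> odd (w ! 0))"
    by (subst card_Collect_nat_shift) (auto intro!: fin)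
  have distance2:
    "card {i. i + 2 < length (c#w) \<and> (c#w) ! (i+2) = (c#w) ! i + 2 \<and> odd ((c#w) ! (i+2))}
     = card {i. i + 2 < length w \<and> w ! (i+2) = w ! i + 2 \<and> odd (w ! (i+2))}
       + of_bool (1 < length w \<and> w ! 1 = c + 2 \<and> odd (w ! 1))"
    by (subst card_Collect_nat_shift) (auto intro!: fin simp: numeral_2_eq_2)
  show ?thesis
    unfolding r_def adjacent distance2 by simp
qed

definition three_at :: "nat list \<Rightarrow> nat \<Rightarrow> bool" where
  "three_at w i \<longleftrightarrow> i < length w \<and> w ! i = 3"

lemma three_at_simps [simp]:
  "\<not> three_at [] i"
  "three_at (c # w) 0 \<longleftrightarrow> c = 3"
  "three_at (c # w) (Suc i) \<longleftrightarrow> three_at w i"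
  by (auto simp: three_at_def)

lemma r_Cons_alphabet:
  assumes "set w \<subseteq> {1,2,3,4}" and "c \<in> {1,2,3,4}"
  shows "r (c # w) = r w + of_bool (c = 1 \<and> three_at w 0) + of_bool (c = 1 \<and> three_at w 1)"
proof -
  have step: "(i < length w \<and> w ! i = c + 2 \<and> odd (w ! i)) \<longleftrightarrow> c = 1 \<and> three_at w i" for i
  proof (cases "i < length w")
    case True
    then have "w ! i \<in> {1,2,3,4}" using assms(1) nth_mem by blast
    with assms(2) show ?thesis by (auto simp: three_at_def)
  qed (simp add: three_at_def)
  show ?thesis
    unfolding r_Cons step ..
qed

lemma words_Suc: "words (Suc n) = (\<lambda>(c, w). c # w) ` ({1,2,3,4} \<times> words n)"
proof
  show "words (Suc n) \<subseteq> (\<lambda>(c, w). c # w) ` ({1,2,3,4} \<times> words n)"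
  proof
    fix v assume "v \<in> words (Suc n)"
    then obtain c w where "v = c # w" "c \<in> {1,2,3,4}" "w \<in> words n"
      by (cases v) (auto simp: words_def)
    then show "v \<in> (\<lambda>(c, w). c # w) ` ({1,2,3,4} \<times> words n)" by force
  qed
qed (auto simp: words_def)

lemma sum_words_Suc:
  "(\<Sum>v\<in>words (Suc n). f v) = (\<Sum>c\<in>{1,2,3,4::nat}. \<Sum>w\<in>words n. f (c # w))"
proof -
  have "inj_on (\<lambda>(c, w). c # w) ({1,2,3,4::nat} \<times> words n)"
    by (auto simp: inj_on_def)
  then have "(\<Sum>v\<in>words (Suc n). f v) = (\<Sum>(c, w)\<in>{1,2,3,4} \<times> words n. f (c # w))"
    unfolding words_Suc by (simp add: sum.reindex case_prod_unfold)
  then show ?thesis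
    by (simp add: sum.cartesian_product)
qed

definition class_sum :: "'a::comm_ring_1 \<Rightarrow> nat \<Rightarrow> bool \<Rightarrow> bool \<Rightarrow> 'a" where
  "class_sum z n a b = (\<Sum>w\<in>words n. if three_at w 0 = a \<and> three_at w 1 = b then z ^ r w else 0)"

text \<open>The transfer matrix entries: total weight of the letters \<open>c\<close> with \<open>(c = 3) = a\<close>
  prepended to a word in state \<open>(b, y)\<close>. For \<open>a\<close> this is the letter \<open>3\<close> alone; otherwise
  \<open>2\<close> and \<open>4\<close> have weight \<open>1\<close> and \<open>1\<close> gains a factor \<open>z\<close> per \<open>3\<close> in state \<open>(b, y)\<close>.\<close>
definition prepend_weight :: "'a::comm_ring_1 \<Rightarrow> bool \<Rightarrow> bool \<Rightarrow> bool \<Rightarrow> 'a" where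
  "prepend_weight z a b y = (if a then 1 else 2 + z ^ (of_bool b + of_bool y))"

lemma sum_prepend_letter:
  fixes z :: "'a::comm_ring_1"
  assumes "set w \<subseteq> {1,2,3,4}"
  shows "(\<Sum>c\<in>{1,2,3,4::nat}. if (c = 3) = a then z ^ r (c # w) else 0)
         = prepend_weight z a (three_at w 0) (three_at w 1) * z ^ r w"
proof -
  have "(\<Sum>c\<in>{1,2,3,4::nat}. h c) = h 1 + h 2 + h 3 + h 4" for h :: "nat \<Rightarrow> 'a"
    by (simp add: algebra_simps)
  then show ?thesis
    using assms
    by (cases a; cases "three_at w 0"; cases "three_at w 1")
       (simp_all add: r_Cons_alphabet prepend_weight_def power_add algebra_simps)
qed

lemma class_sum_Suc:
  "class_sum z (Suc n) a b = prepend_weight z a b True * class_sum z n b True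
                            + prepend_weight z a b False * class_sum z n b False"
proof -
  have "class_sum z (Suc n) a b = (\<Sum>w\<in>words n. \<Sum>c\<in>{1,2,3,4::nat}.
      if three_at w 0 = b then (if (c = 3) = a then z ^ r (c # w) else 0) else 0)"
    unfolding class_sum_def sum_words_Suc
    by (subst sum.swap) (auto intro!: sum.cong)
  also have "\<dots> = (\<Sum>w\<in>words n. if three_at w 0 = b
      then (\<Sum>c\<in>{1,2,3,4::nat}. if (c = 3) = a then z ^ r (c # w) else 0) else 0)"
    by (rule sum.cong) auto
  also have "\<dots> = (\<Sum>w\<in>words n.
      if three_at w 0 = b then prepend_weight z a b (three_at w 1) * z ^ r w else 0)"
  proof (rule sum.cong)
    fix w assume "w \<in> words n"
    then have "set w \<subseteq> {1,2,3,4}" by (simp add: words_def)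
    from sum_prepend_letter[OF this, of a z] show "(if three_at w 0 = b
      then (\<Sum>c\<in>{1,2,3,4::nat}. if (c = 3) = a then z ^ r (c # w) else 0) else 0)
      = (if three_at w 0 = b then prepend_weight z a b (three_at w 1) * z ^ r w else 0)"
      by (cases "three_at w 0 = b") simp_all
  qed simp
  also have "\<dots> = prepend_weight z a b True * class_sum z n b True
                 + prepend_weight z a b False * class_sum z n b False"
    unfolding class_sum_def sum_distrib_left sum.distrib[symmetric]
    by (rule sum.cong) auto
  finally show ?thesis .
qed

lemma class_sum_0: "class_sum z 0 a b = of_bool (\<not> a \<and> \<not> b)"
proof -
  have "words 0 = {[]}" by (auto simp: words_def)
  then show ?thesis by (simp add: class_sum_def r_def)
qed

lemma gen_fun_nth_class_sums:
  "fps_nth (gen_fun z) n = class_sum z n True True + class_sum z n True False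
                         + class_sum z n False True + class_sum z n False False"
  unfolding gen_fun_def class_sum_def sum.distrib[symmetric]
  by simp (rule sum.cong; auto)

lemma gen_fun_nth_recurrence:
  fixes z :: "'a::comm_ring_1"
  shows "fps_nth (gen_fun z) (n + 4) =
           4 * fps_nth (gen_fun z) (n + 3) + (z - 1) * fps_nth (gen_fun z) (n + 2)
           + 2 * (z^2 - 1) * fps_nth (gen_fun z) (n + 1) + z * (z - 1)^2 * fps_nth (gen_fun z) n"
  unfolding gen_fun_nth_class_sums numeral_nat add_Suc_right
  by (simp add: class_sum_Suc prepend_weight_def algebra_simps power2_eq_square)

lemma gen_fun_nth_initial:
  fixes z :: "'a::comm_ring_1"
  shows "fps_nth (gen_fun z) 0 = 1" "fps_nth (gen_fun z) 1 = 4"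
    and "fps_nth (gen_fun z) 2 = 15 + z" "fps_nth (gen_fun z) 3 = 54 + 8 * z + 2 * z^2"
  unfolding gen_fun_nth_class_sums
  by (simp_all add: class_sum_Suc class_sum_0 prepend_weight_def eval_nat_numeral algebra_simps)

lemma denominator_mult_gen_fun:
  fixes z :: "'a::comm_ring_1"
  defines "D \<equiv> 1 - 4 * fps_X - fps_const (z - 1) * fps_X ^ 2
            - fps_const (2 * (z ^ 2 - 1)) * fps_X ^ 3 - fps_const (z * (z - 1) ^ 2) * fps_X ^ 4"
  shows "D * gen_fun z = 1"
proof (rule fps_ext)
  fix n
  let ?g = "fps_nth (gen_fun z)"
  have expand: "D * gen_fun z = gen_fun z - fps_const 4 * (fps_X * gen_fun z)
      - fps_const (z - 1) * (fps_X ^ 2 * gen_fun z)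
      - fps_const (2 * (z ^ 2 - 1)) * (fps_X ^ 3 * gen_fun z)
      - fps_const (z * (z - 1) ^ 2) * (fps_X ^ 4 * gen_fun z)"
    unfolding D_def by (simp add: algebra_simps numeral_fps_const)
  have coeff: "fps_nth (D * gen_fun z) n = ?g n - (if n < 1 then 0 else 4 * ?g (n - 1))
      - (if n < 2 then 0 else (z - 1) * ?g (n - 2))
      - (if n < 3 then 0 else 2 * (z ^ 2 - 1) * ?g (n - 3))
      - (if n < 4 then 0 else z * (z - 1) ^ 2 * ?g (n - 4))"
    unfolding expand by (simp add: fps_X_power_mult_nth flip: power_one_right)
  show "fps_nth (D * gen_fun z) n = fps_nth 1 n"
  proof (cases "n < 4")
    case True
    then have "n = 0 \<or> n = 1 \<or> n = 2 \<or> n = 3" by auto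
    then show ?thesis
      unfolding coeff
      by (elim disjE) (simp_all add: gen_fun_nth_initial[unfolded One_nat_def])
  next
    case False
    then obtain m where "n = m + 4" by (metis add.commute le_Suc_ex not_less)
    then show ?thesis
      unfolding coeff by (simp add: gen_fun_nth_recurrence add.commute)
  qed
qed

theorem mainTheorem9:
  fixes z :: "'a::field"
  shows "gen_fun z = inverse (1 - 4 * fps_X - fps_const (z - 1) * fps_X ^ 2
            - fps_const (2 * (z ^ 2 - 1)) * fps_X ^ 3
            - fps_const (z * (z - 1) ^ 2) * fps_X ^ 4)"
  using denominator_mult_gen_fun[of z] by (simp add: fps_inverse_unique)

end
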